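(* A point $(\bar x,\bar y)\in X\times Y$ is a calm local minimax point of $\min_{x\in X}\max_{y\in Y}f(x,y)$ if and only if there exist $\delta_0>0$ and a radius function $\tau$ such that (1) for every $\delta\in(0,\delta_0]$, $x\in X\cap\mathbb{B}_\delta(\bar x)$ and $y\in Y\cap\mathbb{B}_\delta(\bar y)$: $f(\bar x,y)\le f(\bar x,\bar y)\le\max_{y'\in Y\cap\mathbb{B}_{\tau(\|x-\bar x\|)}(\bar y)}f(x,y')$ (so in particular $(\bar x,\bar y)$ is a local minimax point), and (2) the optimal solution mapping $S_{\tau}(x):=\operatorname{argmax}_{y\in Y\cap\mathbb{B}_{\tau(\|x-\bar x\|)}(\bar y)}f(x,y)$ is inner calm at $(\bar x,\bar y)$ with respect to $X$.
   Context: $X\subseteq\mathbb{R}^n$, $Y\subseteq\mathbb{R}^m$ are nonempty closed sets and $f:\mathbb{R}^n\times\mathbb{R}^m\to\mathbb{R}$. $\mathbb{B}_\epsilon(z)$ is the closed Euclidean ball, $\mathbb{B}$ the closed unit ball. Standing assumption: for every $x\in X$, every $\bar y\in Y$ and every $\epsilon\ge0$ the maximum of $f(x,\cdot)$ over $Y\cap\mathbb{B}_\epsilon(\bar y)$ is attained. A radius function is a map $\tau:[0,\infty)\to[0,\infty)$ with $\tau(0)=0$ and $\tau(\delta)\to0$ as $\delta\downarrow0$; it is calm at $0$ if there exist $\kappa>0$, $\delta_1>0$ with $\tau(\delta)\le\kappa\delta$ for all $\delta\in[0,\delta_1]$. $(\bar x,\bar y)\in X\times Y$ is a local minimax point if there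 exist $\delta_0>0$ and a radius function $\tau$ such that for all $\delta\in(0,\delta_0]$, $x\in X\cap\mathbb{B}_\delta(\bar x)$, $y\in Y\cap\mathbb{B}_\delta(\bar y)$: $f(\bar x,y)\le f(\bar x,\bar y)\le\max_{y'\in Y\cap\mathbb{B}_{\tau(\delta)}(\bar y)}f(x,y')$; it is a calm local minimax point if this holds with $\tau$ calm at $0$. A set-valued map $\Gamma:\mathbb{R}^n\rightrightarrows\mathbb{R}^m$ with $\bar y\in\Gamma(\bar x)$ is inner calm at $(\bar x,\bar y)$ with respect to $X$ if there exist $\kappa>0$, $\delta_0>0$ such that $\bar y\in\Gamma(x)+\kappa\|x-\bar x\|\mathbb{B}$ for all $x\in\mathbb{B}_{\delta_0}(\bar x)\cap X$. *)

theory Defs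
  imports "HOL-Analysis.Analysis"
begin

definition radius_function :: "(real \<Rightarrow> real) \<Rightarrow> bool" where
  "radius_function \<tau> \<longleftrightarrow> (\<forall>d\<ge>0. \<tau> d \<ge> 0) \<and> \<tau> 0 = 0 \<and> (\<tau> \<longlongrightarrow> 0) (at_right 0)"

definition calm_at_0 :: "(real \<Rightarrow> real) \<Rightarrow> bool" where
  "calm_at_0 \<tau> \<longleftrightarrow> (\<exists>\<kappa>>0. \<exists>\<delta>1>0. \<forall>\<delta>\<in>{0..\<delta>1}. \<tau> \<delta> \<le> \<kappa> * \<delta>)"

text \<open>Maximum value of f x over S (attained under the standing assumption).\<close>
definition maxval :: "('a \<Rightarrow> 'b \<Rightarrow> real) \<Rightarrow> 'a \<Rightarrow> 'b set \<Rightarrow> real" where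
  "maxval f x S = (SUP y\<in>S. f x y)"

definition argmax_set :: "('a \<Rightarrow> 'b \<Rightarrow> real) \<Rightarrow> 'a \<Rightarrow> 'b set \<Rightarrow> 'b set" where
  "argmax_set f x S = {y \<in> S. \<forall>y'\<in>S. f x y' \<le> f x y}"

definition max_attained :: "'a::metric_space set \<Rightarrow> 'b::metric_space set \<Rightarrow> ('a \<Rightarrow> 'b \<Rightarrow> real) \<Rightarrow> bool" where
  "max_attained X Y f \<longleftrightarrow> (\<forall>x\<in>X. \<forall>yb\<in>Y. \<forall>\<epsilon>\<ge>0. argmax_set f x (Y \<inter> cball yb \<epsilon>) \<noteq> {})"

definition local_minimax_wrt ::
  "'a::metric_space set \<Rightarrow> 'b::metric_space set \<Rightarrow> ('a \<Rightarrow> 'b \<Rightarrow> real) \<Rightarrow> 'a \<Rightarrow> 'b \<Rightarrow> real \<Rightarrow> (real \<Rightarrow> real) \<Rightarrow> bool" where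
  "local_minimax_wrt X Y f xb yb \<delta>0 \<tau> \<longleftrightarrow>
     (\<forall>\<delta>\<in>{0<..\<delta>0}. \<forall>x\<in>X \<inter> cball xb \<delta>. \<forall>y\<in>Y \<inter> cball yb \<delta>.
        f xb y \<le> f xb yb \<and> f xb yb \<le> maxval f x (Y \<inter> cball yb (\<tau> \<delta>)))"

definition local_minimax_point ::
  "'a::metric_space set \<Rightarrow> 'b::metric_space set \<Rightarrow> ('a \<Rightarrow> 'b \<Rightarrow> real) \<Rightarrow> 'a \<Rightarrow> 'b \<Rightarrow> bool" where
  "local_minimax_point X Y f xb yb \<longleftrightarrow> xb \<in> X \<and> yb \<in> Y \<and>
     (\<exists>\<delta>0>0. \<exists>\<tau>. radius_function \<tau> \<and> local_minimax_wrt X Y f xb yb \<delta>0 \<tau>)"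

definition calm_local_minimax_point ::
  "'a::metric_space set \<Rightarrow> 'b::metric_space set \<Rightarrow> ('a \<Rightarrow> 'b \<Rightarrow> real) \<Rightarrow> 'a \<Rightarrow> 'b \<Rightarrow> bool" where
  "calm_local_minimax_point X Y f xb yb \<longleftrightarrow> xb \<in> X \<and> yb \<in> Y \<and>
     (\<exists>\<delta>0>0. \<exists>\<tau>. radius_function \<tau> \<and> calm_at_0 \<tau> \<and> local_minimax_wrt X Y f xb yb \<delta>0 \<tau>)"

definition inner_calm ::
  "('a::real_normed_vector \<Rightarrow> 'b::real_normed_vector set) \<Rightarrow> 'a \<Rightarrow> 'b \<Rightarrow> 'a set \<Rightarrow> bool" where
  "inner_calm \<Gamma> xb yb X \<longleftrightarrow> yb \<in> \<Gamma> xb \<and>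
     (\<exists>\<kappa>>0. \<exists>\<delta>0>0. \<forall>x\<in>cball xb \<delta>0 \<inter> X.
        yb \<in> {y + z | y z. y \<in> \<Gamma> x \<and> z \<in> cball 0 (\<kappa> * norm (x - xb))})"

end

theory Submission
  imports Defs
begin

text \<open>If \<open>\<tau>(\<delta>) \<le> \<kappa>\<delta>\<close>, then any maximiser of \<open>f x\<close> over the
  ball of radius \<open>\<tau>(\<parallel>x - x\<^sub>0\<parallel>)\<close> lies within \<open>\<kappa>\<parallel>x - x\<^sub>0\<parallel>\<close> of \<open>y\<^sub>0\<close>, which is inner calmness of
  the argmax map. Conversely, inner calmness with modulus \<open>\<kappa>\<close> places such a maximiser inside the
  ball of radius \<open>\<kappa>\<delta>\<close> whenever \<open>\<parallel>x - x\<^sub>0\<parallel> \<le> \<delta>\<close>, so the maximum over that larger ball dominates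
  \<open>f(x\<^sub>0,y\<^sub>0)\<close>, and the linear radius function \<open>\<delta> \<mapsto> \<kappa>\<delta>\<close> witnesses calmness.\<close>

definition local_minimax_dist_wrt ::
  "'a::real_normed_vector set \<Rightarrow> 'b::metric_space set \<Rightarrow> ('a \<Rightarrow> 'b \<Rightarrow> real) \<Rightarrow> 'a \<Rightarrow> 'b \<Rightarrow> real \<Rightarrow> (real \<Rightarrow> real) \<Rightarrow> bool" where
  "local_minimax_dist_wrt X Y f xb yb \<delta>0 \<tau> \<longleftrightarrow>
     (\<forall>\<delta>\<in>{0<..\<delta>0}. \<forall>x\<in>X \<inter> cball xb \<delta>. \<forall>y\<in>Y \<inter> cball yb \<delta>.
        f xb y \<le> f xb yb \<and> f xb yb \<le> maxval f x (Y \<inter> cball yb (\<tau> (norm (x - xb)))))"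

definition argmax_map ::
  "('a::real_normed_vector \<Rightarrow> 'b::metric_space \<Rightarrow> real) \<Rightarrow> 'b set \<Rightarrow> 'a \<Rightarrow> 'b \<Rightarrow> (real \<Rightarrow> real) \<Rightarrow> 'a \<Rightarrow> 'b set" where
  "argmax_map f Y xb yb \<tau> = (\<lambda>x. argmax_set f x (Y \<inter> cball yb (\<tau> (norm (x - xb)))))"

lemma maxval_argmax:
  assumes "y \<in> argmax_set f x S"
  shows "maxval f x S = f x y"
  using assms unfolding maxval_def argmax_set_def
  by (intro cSup_eq_maximum) auto

lemma le_maxval_if_argmax_nonempty:
  assumes "y \<in> S" and "argmax_set f x S \<noteq> {}"
  shows "f x y \<le> maxval f x S"
proof -
  obtain y' where y': "y' \<in> argmax_set f x S" using assms(2) by blast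
  then have "f x y \<le> f x y'" using assms(1) by (auto simp: argmax_set_def)
  with maxval_argmax[OF y'] show ?thesis by simp
qed

lemma argmax_set_nonempty:
  assumes "max_attained X Y f" and "x \<in> X" and "yb \<in> Y" and "r \<ge> 0"
  shows "argmax_set f x (Y \<inter> cball yb r) \<noteq> {}"
  using assms unfolding max_attained_def by blast

lemma inner_calm_iff:
  "inner_calm \<Gamma> xb yb X \<longleftrightarrow> yb \<in> \<Gamma> xb \<and>
     (\<exists>\<kappa>>0. \<exists>\<delta>0>0. \<forall>x\<in>cball xb \<delta>0 \<inter> X. \<exists>y\<in>\<Gamma> x. dist y yb \<le> \<kappa> * norm (x - xb))"
proof -
  have "yb \<in> {y + z | y z. y \<in> A \<and> z \<in> cball 0 r} \<longleftrightarrow> (\<exists>y\<in>A. dist y yb \<le> r)" for A r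
  proof
    assume "yb \<in> {y + z | y z. y \<in> A \<and> z \<in> cball 0 r}"
    then obtain y z where "yb = y + z" "y \<in> A" "norm z \<le> r" by auto
    then show "\<exists>y\<in>A. dist y yb \<le> r" by (intro bexI[of _ y]) (simp_all add: dist_norm)
  next
    assume "\<exists>y\<in>A. dist y yb \<le> r"
    then obtain y where "y \<in> A" "dist y yb \<le> r" by blast
    then show "yb \<in> {y + z | y z. y \<in> A \<and> z \<in> cball 0 r}"
      by (intro CollectI exI[of _ y] exI[of _ "yb - y"]) (auto simp: dist_norm norm_minus_commute)
  qed
  then show ?thesis unfolding inner_calm_def by simp
qed

lemma radius_function_linear:
  assumes "\<kappa> > 0"
  shows "radius_function (\<lambda>d. \<kappa> * d)"
  unfolding radius_function_def using assms by (auto intro!: tendsto_eq_intros)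

lemma calm_at_0_linear:
  assumes "\<kappa> > 0"
  shows "calm_at_0 (\<lambda>d. \<kappa> * d)"
  unfolding calm_at_0_def using assms by (intro exI[of _ \<kappa>] exI[of _ 1]) auto

lemma local_minimax_dist_wrt_if_local_minimax_wrt:
  assumes "local_minimax_wrt X Y f xb yb \<delta>0 \<tau>" and "\<tau> 0 = 0" and "yb \<in> Y"
  shows "local_minimax_dist_wrt X Y f xb yb \<delta>0 \<tau>"
  unfolding local_minimax_dist_wrt_def
proof (intro ballI conjI)
  fix \<delta> x y assume \<delta>: "\<delta> \<in> {0<..\<delta>0}" and x: "x \<in> X \<inter> cball xb \<delta>" and y: "y \<in> Y \<inter> cball yb \<delta>"
  show "f xb y \<le> f xb yb" using assms(1) \<delta> x y unfolding local_minimax_wrt_def by blast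
  show "f xb yb \<le> maxval f x (Y \<inter> cball yb (\<tau> (norm (x - xb))))"
  proof (cases "x = xb")
    case True
    have "Y \<inter> cball yb 0 = {yb}" using assms(3) by auto
    then show ?thesis using True assms(2) by (simp add: maxval_def)
  next
    case False
    define d where "d = norm (x - xb)"
    have "0 < d" "d \<le> \<delta>" using False x by (auto simp: d_def dist_norm norm_minus_commute)
    moreover have "x \<in> X \<inter> cball xb d" using x by (simp add: d_def dist_norm norm_minus_commute)
    moreover have "yb \<in> Y \<inter> cball yb d" using assms(3) \<open>0 < d\<close> by auto
    ultimately show ?thesis using assms(1) \<delta> unfolding local_minimax_wrt_def d_def by fastforce
  qed
qed

lemma inner_calm_argmax_map_if_calm:
  assumes "max_attained X Y f" and "yb \<in> Y" and "radius_function \<tau>" and "calm_at_0 \<tau>"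
  shows "inner_calm (argmax_map f Y xb yb \<tau>) xb yb X"
  unfolding inner_calm_iff
proof
  have "\<tau> 0 = 0" using assms(3) unfolding radius_function_def by blast
  then show "yb \<in> argmax_map f Y xb yb \<tau> xb"
    using assms(2) by (auto simp: argmax_map_def argmax_set_def)
next
  obtain \<kappa> \<delta>1 where "\<kappa> > 0" "\<delta>1 > 0" and calm: "\<forall>\<delta>\<in>{0..\<delta>1}. \<tau> \<delta> \<le> \<kappa> * \<delta>"
    using assms(4) unfolding calm_at_0_def by blast
  have "\<exists>y\<in>argmax_map f Y xb yb \<tau> x. dist y yb \<le> \<kappa> * norm (x - xb)"
    if x: "x \<in> cball xb \<delta>1 \<inter> X" for x
  proof -
    define d where "d = norm (x - xb)"
    have d: "0 \<le> d" "d \<le> \<delta>1" using x by (auto simp: d_def dist_norm norm_minus_commute)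
    then have "\<tau> d \<ge> 0" using assms(3) unfolding radius_function_def by blast
    then obtain y where y: "y \<in> argmax_set f x (Y \<inter> cball yb (\<tau> d))"
      using argmax_set_nonempty[OF assms(1)] x assms(2) by blast
    have "dist y yb \<le> \<tau> d" using y by (auto simp: argmax_set_def dist_commute)
    also have "\<dots> \<le> \<kappa> * d" using calm d by auto
    finally show ?thesis using y unfolding argmax_map_def d_def by blast
  qed
  with \<open>\<kappa> > 0\<close> \<open>\<delta>1 > 0\<close>
  show "\<exists>\<kappa>>0. \<exists>\<delta>0>0. \<forall>x\<in>cball xb \<delta>0 \<inter> X. \<exists>y\<in>argmax_map f Y xb yb \<tau> x. dist y yb \<le> \<kappa> * norm (x - xb)"
    by blast
qed

lemma local_minimax_wrt_linear_if_inner_calm: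
  assumes "max_attained X Y f" and "yb \<in> Y" and "\<kappa> > 0"
    and minimax: "local_minimax_dist_wrt X Y f xb yb \<delta>0 \<tau>"
    and calm: "\<forall>x\<in>cball xb \<delta>1 \<inter> X. \<exists>y\<in>argmax_map f Y xb yb \<tau> x. dist y yb \<le> \<kappa> * norm (x - xb)"
  shows "local_minimax_wrt X Y f xb yb (min \<delta>0 \<delta>1) (\<lambda>d. \<kappa> * d)"
  unfolding local_minimax_wrt_def
proof (intro ballI conjI)
  fix \<delta> x y assume \<delta>: "\<delta> \<in> {0<..min \<delta>0 \<delta>1}" and x: "x \<in> X \<inter> cball xb \<delta>" and y: "y \<in> Y \<inter> cball yb \<delta>"
  have \<delta>0: "\<delta> \<in> {0<..\<delta>0}" using \<delta> by auto
  show "f xb y \<le> f xb yb" using minimax \<delta>0 x y unfolding local_minimax_dist_wrt_def by blast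
  obtain y1 where y1: "y1 \<in> argmax_set f x (Y \<inter> cball yb (\<tau> (norm (x - xb))))"
    and near: "dist y1 yb \<le> \<kappa> * norm (x - xb)"
    using calm x \<delta> unfolding argmax_map_def by fastforce
  have "norm (x - xb) \<le> \<delta>" using x by (simp add: dist_norm norm_minus_commute)
  then have "dist y1 yb \<le> \<kappa> * \<delta>"
    using near \<open>\<kappa> > 0\<close> by (meson mult_left_mono less_imp_le order_trans)
  then have y1_in: "y1 \<in> Y \<inter> cball yb (\<kappa> * \<delta>)"
    using y1 by (auto simp: argmax_set_def dist_commute)
  have "f xb yb \<le> maxval f x (Y \<inter> cball yb (\<tau> (norm (x - xb))))"
    using minimax \<delta>0 x y unfolding local_minimax_dist_wrt_def by blast
  also have "\<dots> = f x y1" using maxval_argmax[OF y1] .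
  also have "\<dots> \<le> maxval f x (Y \<inter> cball yb (\<kappa> * \<delta>))"
  proof (rule le_maxval_if_argmax_nonempty[OF y1_in])
    have "0 \<le> \<kappa> * \<delta>" using \<open>\<kappa> > 0\<close> \<delta> by simp
    then show "argmax_set f x (Y \<inter> cball yb (\<kappa> * \<delta>)) \<noteq> {}"
      using argmax_set_nonempty[OF assms(1) _ assms(2)] x by blast
  qed
  finally show "f xb yb \<le> maxval f x (Y \<inter> cball yb (\<kappa> * \<delta>))" .
qed

theorem mainTheorem6:
  fixes X :: "'a::euclidean_space set" and Y :: "'b::euclidean_space set"
    and f :: "'a \<Rightarrow> 'b \<Rightarrow> real" and xb :: 'a and yb :: 'b
  assumes "closed X" and "closed Y" and "X \<noteq> {}" and "Y \<noteq> {}"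
    and "max_attained X Y f"
    and "xb \<in> X" and "yb \<in> Y"
  shows "calm_local_minimax_point X Y f xb yb \<longleftrightarrow>
    (\<exists>\<delta>0>0. \<exists>\<tau>. radius_function \<tau> \<and>
       (\<forall>\<delta>\<in>{0<..\<delta>0}. \<forall>x\<in>X \<inter> cball xb \<delta>. \<forall>y\<in>Y \<inter> cball yb \<delta>.
          f xb y \<le> f xb yb \<and>
          f xb yb \<le> maxval f x (Y \<inter> cball yb (\<tau> (norm (x - xb))))) \<and>
       inner_calm (\<lambda>x. argmax_set f x (Y \<inter> cball yb (\<tau> (norm (x - xb))))) xb yb X)"
  (is "_ \<longleftrightarrow> ?rhs")
proof -
  have rhs_iff: "?rhs \<longleftrightarrow> (\<exists>\<delta>0>0. \<exists>\<tau>. radius_function \<tau> \<and>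
      local_minimax_dist_wrt X Y f xb yb \<delta>0 \<tau> \<and> inner_calm (argmax_map f Y xb yb \<tau>) xb yb X)"
    by (simp add: local_minimax_dist_wrt_def argmax_map_def)
  show ?thesis
  proof
    assume "calm_local_minimax_point X Y f xb yb"
    then obtain \<delta>0 \<tau> where "\<delta>0 > 0" "radius_function \<tau>" "calm_at_0 \<tau>"
      and minimax: "local_minimax_wrt X Y f xb yb \<delta>0 \<tau>"
      unfolding calm_local_minimax_point_def by blast
    moreover have "\<tau> 0 = 0" using \<open>radius_function \<tau>\<close> unfolding radius_function_def by blast
    ultimately show ?rhs
      unfolding rhs_iff
      using local_minimax_dist_wrt_if_local_minimax_wrt[OF minimax _ assms(7)]
        inner_calm_argmax_map_if_calm[OF assms(5,7)]
      by blast
  next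
    assume ?rhs
    then obtain \<delta>0 \<tau> where "\<delta>0 > 0" and minimax: "local_minimax_dist_wrt X Y f xb yb \<delta>0 \<tau>"
      and "inner_calm (argmax_map f Y xb yb \<tau>) xb yb X"
      unfolding rhs_iff by blast
    then obtain \<kappa> \<delta>1 where "\<kappa> > 0" "\<delta>1 > 0"
      and "\<forall>x\<in>cball xb \<delta>1 \<inter> X. \<exists>y\<in>argmax_map f Y xb yb \<tau> x. dist y yb \<le> \<kappa> * norm (x - xb)"
      unfolding inner_calm_iff by blast
    then have "local_minimax_wrt X Y f xb yb (min \<delta>0 \<delta>1) (\<lambda>d. \<kappa> * d)"
      using local_minimax_wrt_linear_if_inner_calm[OF assms(5,7) \<open>\<kappa> > 0\<close> minimax] by blast
    then show "calm_local_minimax_point X Y f xb yb"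
      unfolding calm_local_minimax_point_def
      using assms(6,7) \<open>\<delta>0 > 0\<close> \<open>\<delta>1 > 0\<close> radius_function_linear calm_at_0_linear \<open>\<kappa> > 0\<close>
      by (intro conjI exI[of _ "min \<delta>0 \<delta>1"] exI[of _ "\<lambda>d. \<kappa> * d"]) auto
  qed
qed

end
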